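(* Let $G$ be the set of formal sums $f=\sum_{t}f_t\,t$ over reduced plane trees $t$, with $f_t\in\mathbb{C}$ and $f_{|}=1$ for the single-leaf tree $|$, equipped with the product $$f\circ g=\sum_{t_0}f_{t_0}\sum_{t_1,\dots,t_n}g_{t_1}\cdots g_{t_n}\; t_0\circ(t_1,\dots,t_n),$$ where $n$ is the number of leaves of $t_0$ and $t_1,\dots,t_n$ range over reduced plane trees. Identify each $f\in G$ with the noncommutative series $\sum_t f_t S^t\in\mathbb{C}\langle\langle S_0,S_1,\dots\rangle\rangle$, and write it $f(S_0;\mathbf S)$ with $\mathbf S=(S_1,S_2,\dots)$. Then for all $f,g\in G$, the series of $h=f\circ g$ is $h(S_0;\mathbf S)=f(g;\mathbf S)$, i.e. it is obtained from $\sum_t f_tS^t$ by substituting the series $\sum_t g_tS^t$ for every occurrence of $S_0$.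
   Context: A reduced plane tree is a rooted plane tree in which every internal vertex has at least two children. For a tree $t_0$ with $n$ leaves and trees $t_1,\dots,t_n$, $t_0\circ(t_1,\dots,t_n)$ is the tree obtained by replacing the leaves of $t_0$, from left to right, by $t_1,\dots,t_n$. The monomial $S^t$ is defined by $S^{|}=S_0$ and, if the root of $t$ has children subtrees $t_1,\dots,t_n$ ($n\ge2$), $S^t=S_{n-1}S^{t_1}\cdots S^{t_n}$ (the Polish code of $t$). $\mathbb{C}\langle\langle S_0,S_1,\dots\rangle\rangle$ is the completion of the free associative algebra on the noncommuting variables $S_0,S_1,\dots$ with respect to the degree in $S_0$. *)

theory Defs
  imports Complex_Main
begin

datatype ptree = Leaf | Node "ptree list"

fun reduced :: "ptree \<Rightarrow> bool" where
  "reduced Leaf = True"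
| "reduced (Node ts) = (2 \<le> length ts \<and> (\<forall>t\<in>set ts. reduced t))"

fun nleaves :: "ptree \<Rightarrow> nat" where
  "nleaves Leaf = 1"
| "nleaves (Node ts) = sum_list (map nleaves ts)"

text \<open>graft t0 ts = t0 o (t1,...,tn): replace the leaves of t0, left to right, by ts.\<close>
fun graft :: "ptree \<Rightarrow> ptree list \<Rightarrow> ptree"
and graft_list :: "ptree list \<Rightarrow> ptree list \<Rightarrow> ptree list" where
  "graft Leaf ts = hd ts"
| "graft (Node us) ts = Node (graft_list us ts)"
| "graft_list [] ts = []"
| "graft_list (u # us) ts =
     graft u (take (nleaves u) ts) # graft_list us (drop (nleaves u) ts)"

text \<open>Polish code S^t, letters S_i encoded by the natural number i.\<close>
fun pcode :: "ptree \<Rightarrow> nat list" where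
  "pcode Leaf = [0]"
| "pcode (Node ts) = (length ts - 1) # concat (map pcode ts)"

text \<open>Elements of G: coefficient functions with f_| = 1 (only values on reduced trees matter).\<close>
definition inG :: "(ptree \<Rightarrow> complex) \<Rightarrow> bool" where
  "inG f \<longleftrightarrow> f Leaf = 1"

definition tcomp :: "(ptree \<Rightarrow> complex) \<Rightarrow> (ptree \<Rightarrow> complex) \<Rightarrow> ptree \<Rightarrow> complex" where
  "tcomp f g t = (\<Sum>(t0, ts) \<in> {(t0, ts). reduced t0 \<and> length ts = nleaves t0
        \<and> (\<forall>s\<in>set ts. reduced s) \<and> graft t0 ts = t}.
     f t0 * prod_list (map g ts))"

text \<open>Noncommutative series in S_0,S_1,...: coefficient function on words.\<close>
definition series :: "(ptree \<Rightarrow> complex) \<Rightarrow> nat list \<Rightarrow> complex" where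
  "series f w = (\<Sum>t \<in> {t. reduced t \<and> pcode t = w}. f t)"

text \<open>Substitution of a series G without constant term for every occurrence of S_0 in F:
  coefficient of w in sum_u F_u * (u with each letter 0 replaced by G).\<close>
definition subst0 :: "(nat list \<Rightarrow> complex) \<Rightarrow> (nat list \<Rightarrow> complex) \<Rightarrow> nat list \<Rightarrow> complex" where
  "subst0 F G w = (\<Sum>(u, ws) \<in> {(u, ws). length ws = length u \<and> concat ws = w
        \<and> (\<forall>j<length u. ws ! j \<noteq> [] \<and> (u ! j \<noteq> 0 \<longrightarrow> ws ! j = [u ! j]))}.
     F u * prod_list (map2 (\<lambda>x v. if x = 0 then G v else 1) u ws))"

end

theory Submission
  imports Defs
begin

text \<open>The Polish code of a reduced plane tree is uniquely decodable, even as a prefix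
  (its first letter fixes the arity of the root), and the letters \<open>S\<^sub>0\<close> in the code of
  \<open>t\<^sub>0\<close> mark its leaves from left to right; so the code of \<open>t\<^sub>0 \<circ> (t\<^sub>1, \<dots>, t\<^sub>n)\<close> arises from
  the code of \<open>t\<^sub>0\<close> by substituting the codes of \<open>t\<^sub>1, \<dots>, t\<^sub>n\<close> for those letters.
  Coding therefore maps the graftings producing a word \<open>w\<close> bijectively onto the
  substitutions producing \<open>w\<close> in which the word and all substituted blocks are codes of
  reduced trees, with matching coefficients; every other substitution contributes zero,
  because a series of the form \<open>\<Sum>\<^sub>t f\<^sub>t S\<^sup>t\<close> vanishes off such codes.\<close>

lemma count_list_concat: "count_list (concat xss) x = sum_list (map (\<lambda>xs. count_list xs x) xss)"
  by (induction xss) auto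

definition subst_block :: "nat \<Rightarrow> nat list \<Rightarrow> bool" where
  "subst_block x v \<longleftrightarrow> v \<noteq> [] \<and> (x \<noteq> 0 \<longrightarrow> v = [x])"

fun subst_zeros :: "nat list \<Rightarrow> nat list list \<Rightarrow> nat list list" where
  "subst_zeros [] vs = []"
| "subst_zeros (x # u) vs =
     (if x = 0 then hd vs # subst_zeros u (tl vs) else [x] # subst_zeros u vs)"

fun zero_blocks :: "nat list \<Rightarrow> nat list list \<Rightarrow> nat list list" where
  "zero_blocks (x # u) (v # ws) = (if x = 0 then v # zero_blocks u ws else zero_blocks u ws)"
| "zero_blocks _ _ = []"

lemma subst_zeros_append:
  "subst_zeros (u @ u') vs = subst_zeros u vs @ subst_zeros u' (drop (count_list u 0) vs)"
  by (induction u arbitrary: vs) (auto simp: drop_Suc)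

lemma subst_zeros_take:
  "count_list u 0 \<le> n \<Longrightarrow> subst_zeros u (take n vs) = subst_zeros u vs"
  by (induction u arbitrary: vs n) (auto simp: tl_take take_Suc Suc_le_eq)

lemma subst_zeros_zero_blocks:
  "list_all2 subst_block u ws \<Longrightarrow> subst_zeros u (zero_blocks u ws) = ws"
  by (induction rule: list_all2_induct) (auto simp: subst_block_def)

lemma zero_blocks_subst_zeros:
  "length vs = count_list u 0 \<Longrightarrow> zero_blocks u (subst_zeros u vs) = vs"
  by (induction u arbitrary: vs) (auto simp: length_Suc_conv)

lemma length_zero_blocks: "length ws = length u \<Longrightarrow> length (zero_blocks u ws) = count_list u 0"
  by (induction u ws rule: zero_blocks.induct) auto

lemma subst_block_subst_zeros:
  "[] \<notin> set vs \<Longrightarrow> count_list u 0 \<le> length vs \<Longrightarrow> list_all2 subst_block u (subst_zeros u vs)"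
proof (induction u arbitrary: vs)
  case (Cons x u)
  then show ?case by (cases vs) (auto simp: subst_block_def)
qed simp

lemma prod_list_map2_zero_blocks:
  "length ws = length u \<Longrightarrow>
   prod_list (map2 (\<lambda>x v. if x = 0 then G v else 1) u ws) = prod_list (map G (zero_blocks u ws))"
  by (induction u ws rule: zero_blocks.induct) auto

lemma subst_block_bounds:
  "list_all2 subst_block u ws \<Longrightarrow> length u \<le> length (concat ws) \<and> set u \<subseteq> insert 0 (set (concat ws))"
  by (induction rule: list_all2_induct)
    (auto simp: subst_block_def Suc_le_eq simp flip: length_greater_0_conv)

lemma count_list_pcode: "reduced t \<Longrightarrow> count_list (pcode t) 0 = nleaves t"
proof (induction t)
  case (Node ts)
  then have "map (\<lambda>t. count_list (pcode t) 0) ts = map nleaves ts" by simp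
  with Node.prems show ?case by (simp add: count_list_concat comp_def del: map_eq_conv)
qed simp

lemma reduced_pcode_graft:
  "reduced t0 \<Longrightarrow> length ts = nleaves t0 \<Longrightarrow> \<forall>s\<in>set ts. reduced s \<Longrightarrow>
     reduced (graft t0 ts) \<and> pcode (graft t0 ts) = concat (subst_zeros (pcode t0) (map pcode ts))"
  "\<forall>u\<in>set us. reduced u \<Longrightarrow> length ts = sum_list (map nleaves us) \<Longrightarrow> \<forall>s\<in>set ts. reduced s \<Longrightarrow>
     length (graft_list us ts) = length us \<and> (\<forall>t\<in>set (graft_list us ts). reduced t) \<and>
     concat (map pcode (graft_list us ts)) =
       concat (subst_zeros (concat (map pcode us)) (map pcode ts))"
proof (induction t0 ts and us ts rule: graft_graft_list.induct)
  case (1 ts)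
  then show ?case by (cases ts) auto
next
  case (2 us ts)
  then have "length (graft_list us ts) = length us \<and> (\<forall>t\<in>set (graft_list us ts). reduced t) \<and>
      concat (map pcode (graft_list us ts)) =
        concat (subst_zeros (concat (map pcode us)) (map pcode ts))"
    by simp
  with "2.prems"(1) show ?case by simp
next
  case (3 ts)
  then show ?case by simp
next
  case (4 u us ts)
  let ?n = "nleaves u"
  have red: "reduced u" "\<forall>u\<in>set us. reduced u" using "4.prems"(1) by simp_all
  have zeros_u: "count_list (pcode u) 0 = ?n" using red(1) by (simp add: count_list_pcode)
  have "subst_zeros (pcode u) (map pcode (take ?n ts)) = subst_zeros (pcode u) (map pcode ts)"
    using subst_zeros_take[of "pcode u" ?n "map pcode ts"] zeros_u by (simp add: take_map)
  moreover have "reduced (graft u (take ?n ts)) \<and>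
      pcode (graft u (take ?n ts)) = concat (subst_zeros (pcode u) (map pcode (take ?n ts)))"
    using "4.prems"(2,3) by (intro "4.IH"(1)[OF red(1)]) (auto dest: in_set_takeD)
  moreover have "length (graft_list us (drop ?n ts)) = length us \<and>
      (\<forall>t\<in>set (graft_list us (drop ?n ts)). reduced t) \<and>
      concat (map pcode (graft_list us (drop ?n ts))) =
        concat (subst_zeros (concat (map pcode us)) (map pcode (drop ?n ts)))"
    using "4.prems"(2,3) by (intro "4.IH"(2)[OF red(2)]) (auto dest: in_set_dropD)
  ultimately show ?case using zeros_u by (simp add: subst_zeros_append drop_map)
qed

lemma pcode_ne: "pcode t \<noteq> []"
  by (cases t) auto

lemma hd_pcode_eq_0_iff: "reduced t \<Longrightarrow> hd (pcode t) = 0 \<longleftrightarrow> t = Leaf"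
  by (cases t) auto

text \<open>The head letter of a code determines the number of children of the root, so both
  lists can be peeled one node at a time.\<close>

lemma pcodes_append_inj:
  "\<forall>t\<in>set ts. reduced t \<Longrightarrow> \<forall>t\<in>set ts'. reduced t \<Longrightarrow> length ts = length ts' \<Longrightarrow>
   concat (map pcode ts) @ xs = concat (map pcode ts') @ ys \<Longrightarrow> ts = ts' \<and> xs = ys"
proof (induction "length (concat (map pcode ts))" arbitrary: ts ts' rule: less_induct)
  case less
  show ?case
  proof (cases ts)
    case Nil
    with less.prems show ?thesis by simp
  next
    case (Cons t rest)
    with less.prems(3) obtain t' rest' where ts': "ts' = t' # rest'" by (cases ts') auto
    have red: "reduced t" "reduced t'" using less.prems(1,2) Cons ts' by auto
    have eq: "pcode t @ concat (map pcode rest) @ xs = pcode t' @ concat (map pcode rest') @ ys"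
      using less.prems(4) Cons ts' by simp
    then have hd_eq: "hd (pcode t) = hd (pcode t')" by (metis hd_append2 pcode_ne)
    show ?thesis
    proof (cases t)
      case Leaf
      have t': "t' = Leaf" using red(2) hd_eq Leaf hd_pcode_eq_0_iff[of t'] by simp
      have "rest = rest' \<and> xs = ys"
      proof (rule less.hyps)
        show "length (concat (map pcode rest)) < length (concat (map pcode ts))" using Cons Leaf by simp
        show "concat (map pcode rest) @ xs = concat (map pcode rest') @ ys" using eq Leaf t' by simp
        show "\<forall>t\<in>set rest. reduced t" using less.prems(1) Cons by simp
        show "\<forall>t\<in>set rest'. reduced t" using less.prems(2) ts' by simp
        show "length rest = length rest'" using less.prems(3) Cons ts' by simp
      qed
      with Cons ts' Leaf t' show ?thesis by simp
    next
      case (Node us)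
      have "t' \<noteq> Leaf" using red(1) hd_eq Node by auto
      then obtain us' where t': "t' = Node us'" by (cases t') auto
      have len: "length us = length us'" using red hd_eq unfolding Node t' by (simp, linarith)
      have "us @ rest = us' @ rest' \<and> xs = ys"
      proof (rule less.hyps)
        show "length (concat (map pcode (us @ rest))) < length (concat (map pcode ts))"
          using Cons Node by simp
        show "concat (map pcode (us @ rest)) @ xs = concat (map pcode (us' @ rest')) @ ys"
          using eq Node t' by simp
        show "\<forall>t\<in>set (us @ rest). reduced t" using less.prems(1) Cons Node by auto
        show "\<forall>t\<in>set (us' @ rest'). reduced t" using less.prems(2) ts' t' red by auto
        show "length (us @ rest) = length (us' @ rest')" using less.prems(3) Cons ts' len by simp
      qed
      with Cons ts' Node t' len show ?thesis by simp
    qed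
  qed
qed

lemma pcode_inj: "reduced t \<Longrightarrow> reduced t' \<Longrightarrow> pcode t = pcode t' \<Longrightarrow> t = t'"
  using pcodes_append_inj[of "[t]" "[t']" "[]" "[]"] by simp

lemma series_pcode: "reduced t \<Longrightarrow> series f (pcode t) = f t"
proof -
  assume "reduced t"
  then have "{t'. reduced t' \<and> pcode t' = pcode t} = {t}" using pcode_inj by auto
  then show ?thesis by (simp add: series_def)
qed

lemma series_nonzero_imp_pcode: "series f w \<noteq> 0 \<Longrightarrow> w \<in> pcode ` {t. reduced t}"
proof (rule ccontr)
  assume "w \<notin> pcode ` {t. reduced t}"
  then have no_tree: "{t. reduced t \<and> pcode t = w} = {}" by auto
  assume "series f w \<noteq> 0"
  then show False by (simp add: series_def no_tree)
qed

definition graftings :: "nat list \<Rightarrow> (ptree \<times> ptree list) set" where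
  "graftings w = {(t0, ts). reduced t0 \<and> length ts = nleaves t0 \<and> (\<forall>s\<in>set ts. reduced s)
     \<and> pcode (graft t0 ts) = w}"

definition substitutions :: "nat list \<Rightarrow> (nat list \<times> nat list list) set" where
  "substitutions w = {(u, ws). concat ws = w \<and> list_all2 subst_block u ws}"

definition code_of_grafting :: "ptree \<times> ptree list \<Rightarrow> nat list \<times> nat list list" where
  "code_of_grafting = (\<lambda>(t0, ts). (pcode t0, subst_zeros (pcode t0) (map pcode ts)))"

lemma series_tcomp:
  "series (tcomp f g) w = (\<Sum>(t0, ts)\<in>graftings w. f t0 * prod_list (map g ts))"
proof (cases "w \<in> pcode ` {t. reduced t}")
  case True
  then obtain t where t: "reduced t" "w = pcode t" by auto
  then have "{t'. reduced t' \<and> pcode t' = w} = {t}" using pcode_inj by auto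
  moreover have "{(t0, ts). reduced t0 \<and> length ts = nleaves t0 \<and> (\<forall>s\<in>set ts. reduced s)
      \<and> graft t0 ts = t} = graftings w"
    using t reduced_pcode_graft(1) pcode_inj by (auto simp: graftings_def)
  ultimately show ?thesis by (simp add: series_def tcomp_def)
next
  case False
  then have no_tree: "{t. reduced t \<and> pcode t = w} = {}" and no_grafting: "graftings w = {}"
    using reduced_pcode_graft(1) by (fastforce simp: graftings_def)+
  show ?thesis by (simp add: series_def no_tree no_grafting)
qed

lemma subst0_eq_sum_substitutions:
  "subst0 F G w = (\<Sum>(u, ws)\<in>substitutions w. F u * prod_list (map G (zero_blocks u ws)))"
proof -
  have "{(u, ws). length ws = length u \<and> concat ws = w
      \<and> (\<forall>j<length u. ws ! j \<noteq> [] \<and> (u ! j \<noteq> 0 \<longrightarrow> ws ! j = [u ! j]))} = substitutions w"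
    by (auto simp: substitutions_def list_all2_conv_all_nth subst_block_def)
  then show ?thesis
    unfolding subst0_def
    by (intro sum.cong) (auto simp: substitutions_def prod_list_map2_zero_blocks dest: list_all2_lengthD)
qed

lemma finite_substitutions: "finite (substitutions w)"
proof (rule finite_subset)
  let ?blocks = "{v. set v \<subseteq> set w \<and> length v \<le> length w}"
  show "substitutions w \<subseteq> {u. set u \<subseteq> insert 0 (set w) \<and> length u \<le> length w}
      \<times> {ws. set ws \<subseteq> ?blocks \<and> length ws \<le> length w}"
  proof clarify
    fix u ws assume "(u, ws) \<in> substitutions w"
    then have w: "w = concat ws" and blocks: "list_all2 subst_block u ws"
      by (auto simp: substitutions_def)
    have "v \<in> ?blocks" if "v \<in> set ws" for v
      using that member_le_sum_list[of "length v" "map length ws"] by (auto simp: w length_concat)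
    with subst_block_bounds[OF blocks] list_all2_lengthD[OF blocks] show
      "u \<in> {u. set u \<subseteq> insert 0 (set w) \<and> length u \<le> length w}
        \<and> ws \<in> {ws. set ws \<subseteq> ?blocks \<and> length ws \<le> length w}"
      by (auto simp: w)
  qed
  show "finite ({u. set u \<subseteq> insert 0 (set w) \<and> length u \<le> length w}
      \<times> {ws. set ws \<subseteq> ?blocks \<and> length ws \<le> length w})"
    by (intro finite_cartesian_product finite_lists_length_le) auto
qed

lemma grafting_code:
  assumes "(t0, ts) \<in> graftings w"
  shows "concat (subst_zeros (pcode t0) (map pcode ts)) = w"
    and "list_all2 subst_block (pcode t0) (subst_zeros (pcode t0) (map pcode ts))"
    and "zero_blocks (pcode t0) (subst_zeros (pcode t0) (map pcode ts)) = map pcode ts"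
proof -
  have red: "reduced t0" "\<forall>s\<in>set ts. reduced s" and len: "length ts = nleaves t0"
    and w: "pcode (graft t0 ts) = w"
    using assms by (auto simp: graftings_def)
  have zeros: "count_list (pcode t0) 0 = length (map pcode ts)"
    using red(1) len by (simp add: count_list_pcode)
  show "concat (subst_zeros (pcode t0) (map pcode ts)) = w"
    using reduced_pcode_graft(1)[OF red(1) len red(2)] w by simp
  show "list_all2 subst_block (pcode t0) (subst_zeros (pcode t0) (map pcode ts))"
    using zeros pcode_ne by (intro subst_block_subst_zeros) (auto simp: eq_commute[of "[]"])
  show "zero_blocks (pcode t0) (subst_zeros (pcode t0) (map pcode ts)) = map pcode ts"
    using zeros by (simp add: zero_blocks_subst_zeros)
qed

lemma code_of_grafting_in_substitutions: "code_of_grafting ` graftings w \<subseteq> substitutions w"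
  using grafting_code(1,2) by (auto simp: code_of_grafting_def substitutions_def)

lemma inj_on_code_of_grafting: "inj_on code_of_grafting (graftings w)"
proof (rule inj_onI, clarify)
  fix t0 ts t0' ts'
  assume p: "(t0, ts) \<in> graftings w" and p': "(t0', ts') \<in> graftings w"
    and eq: "code_of_grafting (t0, ts) = code_of_grafting (t0', ts')"
  have red: "reduced t0" "reduced t0'" "\<forall>s\<in>set ts. reduced s" "\<forall>s\<in>set ts'. reduced s"
    using p p' by (auto simp: graftings_def)
  from eq have "pcode t0 = pcode t0'" by (simp add: code_of_grafting_def)
  then have t0: "t0 = t0'" using red pcode_inj by blast
  from eq have "subst_zeros (pcode t0) (map pcode ts) = subst_zeros (pcode t0) (map pcode ts')"
    by (simp add: code_of_grafting_def t0)
  then have codes: "map pcode ts = map pcode ts'"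
    using grafting_code(3)[OF p] grafting_code(3)[OF p'] unfolding t0 by metis
  then have "length ts = length ts'" by (rule map_eq_imp_length_eq)
  with red(3,4) codes have "ts = ts'" using pcodes_append_inj[of ts ts' "[]" "[]"] by simp
  with t0 show "t0 = t0' \<and> ts = ts'" by simp
qed

lemma substitution_of_pcodes_in_code_image:
  assumes uws: "(u, ws) \<in> substitutions w"
    and u: "u \<in> pcode ` {t. reduced t}" and blocks: "set (zero_blocks u ws) \<subseteq> pcode ` {t. reduced t}"
  shows "(u, ws) \<in> code_of_grafting ` graftings w"
proof -
  obtain t0 where t0: "reduced t0" "u = pcode t0" using u by auto
  have "zero_blocks u ws \<in> lists (pcode ` {t. reduced t})" using blocks by auto
  then obtain ts where ts: "\<forall>s\<in>set ts. reduced s" "zero_blocks u ws = map pcode ts"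
    by (auto simp: lists_image)
  have w: "concat ws = w" and sb: "list_all2 subst_block u ws"
    using uws by (auto simp: substitutions_def)
  have len: "length ts = nleaves t0"
    using length_zero_blocks[OF list_all2_lengthD[OF sb, symmetric]] ts(2) t0
    by (simp add: count_list_pcode)
  have ws: "subst_zeros u (map pcode ts) = ws" using subst_zeros_zero_blocks[OF sb] ts(2) by simp
  then have "(t0, ts) \<in> graftings w"
    using reduced_pcode_graft(1)[OF t0(1) len ts(1)] t0 ts(1) len w by (simp add: graftings_def)
  moreover have "code_of_grafting (t0, ts) = (u, ws)" using ws t0 by (simp add: code_of_grafting_def)
  ultimately show ?thesis by (metis rev_image_eqI)
qed

lemma series_vanishes_off_code_image:
  assumes "(u, ws) \<in> substitutions w" and "(u, ws) \<notin> code_of_grafting ` graftings w"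
  shows "series f u * prod_list (map (series g) (zero_blocks u ws)) = 0"
proof (rule ccontr)
  assume "series f u * prod_list (map (series g) (zero_blocks u ws)) \<noteq> 0"
  then have "u \<in> pcode ` {t. reduced t}" and "set (zero_blocks u ws) \<subseteq> pcode ` {t. reduced t}"
    using series_nonzero_imp_pcode[of f] series_nonzero_imp_pcode[of g]
    by (auto simp: prod_list_zero_iff image_iff)
  with assms substitution_of_pcodes_in_code_image show False by blast
qed

lemma coefficient_code_of_grafting:
  assumes "(t0, ts) \<in> graftings w"
  shows "series f (pcode t0) *
      prod_list (map (series g) (zero_blocks (pcode t0) (subst_zeros (pcode t0) (map pcode ts))))
    = f t0 * prod_list (map g ts)"
proof -
  have "reduced t0" "\<forall>s\<in>set ts. reduced s" using assms by (auto simp: graftings_def)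
  then show ?thesis using grafting_code(3)[OF assms] by (simp add: series_pcode cong: map_cong)
qed

theorem mainTheorem7:
  fixes f g :: "ptree \<Rightarrow> complex"
  assumes "inG f" and "inG g"
  shows "series (tcomp f g) = subst0 (series f) (series g)"
proof
  fix w
  let ?K = "\<lambda>(u, ws). series f u * prod_list (map (series g) (zero_blocks u ws))"
  have "series (tcomp f g) w = (\<Sum>(t0, ts)\<in>graftings w. f t0 * prod_list (map g ts))"
    by (rule series_tcomp)
  also have "\<dots> = sum (?K \<circ> code_of_grafting) (graftings w)"
    by (intro sum.cong refl) (auto simp: code_of_grafting_def coefficient_code_of_grafting)
  also have "\<dots> = sum ?K (code_of_grafting ` graftings w)"
    by (simp add: sum.reindex inj_on_code_of_grafting)
  also have "\<dots> = sum ?K (substitutions w)"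
    using series_vanishes_off_code_image
    by (intro sum.mono_neutral_left finite_substitutions code_of_grafting_in_substitutions) fastforce
  also have "\<dots> = subst0 (series f) (series g) w"
    by (simp add: subst0_eq_sum_substitutions)
  finally show "series (tcomp f g) w = subst0 (series f) (series g) w" .
qed

end
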